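(* Let $G=(\mathcal{V},\mathcal{C})$ and let $G^M=(\mathcal{V}^M,\mathcal{E}^M)$ be a marginal polytope diagram of $G$. Then: (1) for all $c,s,t\in\mathcal{V}^M$ with $t\subsetneq s\subsetneq c$, if $(c\to s)\in\mathcal{E}^M$ then $(c\to t)\Leftrightarrow(s\to t)$; (2) if $(c\to s_1),(c\to s_2)\in\mathcal{E}^M$, then for every $t\in\mathcal{V}^M$ with $t\subsetneq s_1$ and $t\subsetneq s_2$, $(s_1\to t)\Leftrightarrow(s_2\to t)$.
   Context: $\mathcal{V}=\{1,\dots,n\}$, each $x_i$ ranges over a finite set, $\mathbf{x}_s=(x_i)_{i\in s}$; $\mathcal{C}$ is a collection of subsets of $\mathcal{V}$. A marginal polytope diagram of $G=(\mathcal{V},\mathcal{C})$ is a pair $G^M=(\mathcal{V}^M,\mathcal{E}^M)$ with $\mathcal{C}\subseteq\mathcal{V}^M\subseteq 2^{\mathcal{V}}$ and $\mathcal{E}^M$ a set of directed edges $(c\to s)$ with $c,s\in\mathcal{V}^M$ and $s\subseteq c$ (edges $(c\to c)$ allowed). For a set $E$ of pairs $(c\to s)$ with $s\subseteq c$, let $P(E)$ be the set of families $\boldsymbol\mu=(\mu_c)_{c\in\mathcal{C}}$ of real functions $\mu_c(\mathbf{x}_c)$ for which there exist real functions $\mu_v(\mathbf{x}_v)$ for all other subsets $v\subseteq\mathcal{V}$ with $\sum_{\mathbf{x}_{c\setminus s}}\mu_c(\mathbf{x}_c)=\mu_s(\mathbf{x}_s)$ for all $(c\to s)\in E$ and all $\mathbf{x}_s$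 (i.e. $\{\boldsymbol\mu\mid\cdot\}$ denotes the set of $\boldsymbol\mu$ satisfying the constraints for some values of the auxiliary variables). Edge equivalence: for $c_1,c_2,t\in\mathcal{V}^M$ with $t\subseteq c_1$, $t\subseteq c_2$, let $E_0=\mathcal{E}^M\setminus\{(\hat c\to t):\hat c\in\mathcal{V}^M,\ t\subseteq\hat c\}$; the edges $(c_1\to t)$ and $(c_2\to t)$ (not necessarily in $\mathcal{E}^M$) are equivalent w.r.t. $G^M$, written $(c_1\to t)\Leftrightarrow(c_2\to t)$, if $P(E_0\cup\{(c_1\to t)\})=P(E_0\cup\{(c_2\to t)\})$. *)

theory Defs
  imports Complex_Main "HOL-Library.FuncSet"
begin

text \<open>Variables are the natural numbers 1..n; variable i ranges over the finite set D i.
  A configuration x_s of the variables in s is an element of the extensional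
  function space PiE s D (values outside s are fixed to undefined).\<close>

definition merge_conf :: "nat set \<Rightarrow> (nat \<Rightarrow> 'a) \<Rightarrow> (nat \<Rightarrow> 'a) \<Rightarrow> (nat \<Rightarrow> 'a)" where
  "merge_conf s x y = (\<lambda>i. if i \<in> s then x i else y i)"

definition edge_constraint ::
  "(nat \<Rightarrow> 'a set) \<Rightarrow> (nat set \<Rightarrow> (nat \<Rightarrow> 'a) \<Rightarrow> real) \<Rightarrow> nat set \<Rightarrow> nat set \<Rightarrow> bool" where
  "edge_constraint D mu c s \<longleftrightarrow>
     (\<forall>x \<in> PiE s D. (\<Sum>y \<in> PiE (c - s) D. mu c (merge_conf s x y)) = mu s x)"

text \<open>P(E): the set of families (mu_c)_{c in C} (restricted to C and to valid
  configurations) for which some choice of the auxiliary functions mu_v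
  (v any other subset) satisfies all constraints of E.\<close>
definition Pset ::
  "(nat \<Rightarrow> 'a set) \<Rightarrow> nat set set \<Rightarrow> (nat set \<times> nat set) set
     \<Rightarrow> (nat set \<Rightarrow> (nat \<Rightarrow> 'a) \<Rightarrow> real) set" where
  "Pset D C E = {(\<lambda>c\<in>C. \<lambda>x\<in>PiE c D. mu c x) | mu.
                   \<forall>(c, s) \<in> E. edge_constraint D mu c s}"

definition marginal_polytope_diagram ::
  "nat \<Rightarrow> nat set set \<Rightarrow> nat set set \<Rightarrow> (nat set \<times> nat set) set \<Rightarrow> bool" where
  "marginal_polytope_diagram n C VM EM \<longleftrightarrow>
     C \<subseteq> VM \<and> VM \<subseteq> Pow {1..n} \<and>
     (\<forall>(c, s) \<in> EM. c \<in> VM \<and> s \<in> VM \<and> s \<subseteq> c)"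

definition edge_equiv ::
  "(nat \<Rightarrow> 'a set) \<Rightarrow> nat set set \<Rightarrow> nat set set \<Rightarrow> (nat set \<times> nat set) set
     \<Rightarrow> nat set \<Rightarrow> nat set \<Rightarrow> nat set \<Rightarrow> bool" where
  "edge_equiv D C VM EM c1 c2 t \<longleftrightarrow>
     (let E0 = EM - {(ch, t) | ch. ch \<in> VM \<and> t \<subseteq> ch}
      in Pset D C (E0 \<union> {(c1, t)}) = Pset D C (E0 \<union> {(c2, t)}))"

end

theory Submission
  imports Defs
begin

text \<open>Marginalisation is transitive: summing \<open>\<mu>\<^sub>c\<close> down to \<open>s\<close> and then to \<open>t \<subseteq> s\<close> is the same as
  summing it down to \<open>t\<close> directly, because a configuration of \<open>c - t\<close> splits uniquely into
  configurations of \<open>s - t\<close> and \<open>c - s\<close>. Hence, once the edge \<open>(c \<rightarrow> s)\<close> is imposed, the constraints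
  \<open>(s \<rightarrow> t)\<close> and \<open>(c \<rightarrow> t)\<close> say the same thing. Removing all edges into \<open>t\<close> never removes
  \<open>(c \<rightarrow> s)\<close> when \<open>t \<subset> s\<close>, so both parts of the proposition follow: in part (2) the constraints
  \<open>(s\<^sub>1 \<rightarrow> t)\<close> and \<open>(s\<^sub>2 \<rightarrow> t)\<close> are both equivalent to \<open>(c \<rightarrow> t)\<close>.\<close>

lemma bij_betw_merge_conf:
  assumes "A \<inter> B = {}"
  shows "bij_betw (\<lambda>(z, w). merge_conf A z w) (PiE A D \<times> PiE B D) (PiE (A \<union> B) D)"
proof (rule bij_betw_byWitness[where f' = "\<lambda>y. (restrict y A, restrict y B)"])
  show "\<forall>a\<in>PiE A D \<times> PiE B D. (\<lambda>y. (restrict y A, restrict y B)) ((\<lambda>(z, w). merge_conf A z w) a) = a"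
    using assms by (auto simp: merge_conf_def fun_eq_iff PiE_iff extensional_def)
  show "\<forall>a'\<in>PiE (A \<union> B) D. (\<lambda>(z, w). merge_conf A z w) ((\<lambda>y. (restrict y A, restrict y B)) a') = a'"
    by (auto simp: merge_conf_def fun_eq_iff PiE_iff extensional_def)
  show "(\<lambda>(z, w). merge_conf A z w) ` (PiE A D \<times> PiE B D) \<subseteq> PiE (A \<union> B) D"
    using assms by (auto simp: merge_conf_def PiE_iff extensional_def)
  show "(\<lambda>y. (restrict y A, restrict y B)) ` PiE (A \<union> B) D \<subseteq> PiE A D \<times> PiE B D"
    by (auto simp: PiE_iff)
qed

lemma sum_merge_conf_split:
  assumes "t \<subseteq> s" and "s \<subseteq> c"
  shows "(\<Sum>y \<in> PiE (c - t) D. f (merge_conf t x y))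
       = (\<Sum>z \<in> PiE (s - t) D. \<Sum>w \<in> PiE (c - s) D. f (merge_conf s (merge_conf t x z) w))"
proof -
  have split: "c - t = (s - t) \<union> (c - s)" and disj: "(s - t) \<inter> (c - s) = {}"
    using assms by auto
  have merge: "merge_conf t x (merge_conf (s - t) z w) = merge_conf s (merge_conf t x z) w" for z w
    using assms by (auto simp: merge_conf_def fun_eq_iff)
  have "(\<Sum>y \<in> PiE (c - t) D. f (merge_conf t x y))
      = (\<Sum>(z, w) \<in> PiE (s - t) D \<times> PiE (c - s) D. f (merge_conf t x (merge_conf (s - t) z w)))"
    unfolding split
    using sum.reindex_bij_betw[OF bij_betw_merge_conf[OF disj], of "\<lambda>y. f (merge_conf t x y)"]
    by (simp add: case_prod_unfold)
  also have "\<dots> = (\<Sum>z \<in> PiE (s - t) D. \<Sum>w \<in> PiE (c - s) D. f (merge_conf s (merge_conf t x z) w))"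
    by (simp add: sum.cartesian_product merge)
  finally show ?thesis .
qed

lemma edge_constraint_trans_iff:
  assumes "t \<subseteq> s" and "s \<subseteq> c" and cs: "edge_constraint D mu c s"
  shows "edge_constraint D mu s t \<longleftrightarrow> edge_constraint D mu c t"
proof -
  have "(\<Sum>y \<in> PiE (c - t) D. mu c (merge_conf t x y)) = (\<Sum>z \<in> PiE (s - t) D. mu s (merge_conf t x z))"
    if x: "x \<in> PiE t D" for x
  proof -
    have "merge_conf t x z \<in> PiE s D" if "z \<in> PiE (s - t) D" for z
      using x that \<open>t \<subseteq> s\<close> by (auto simp: merge_conf_def PiE_iff extensional_def)
    then show ?thesis
      using cs unfolding sum_merge_conf_split[OF assms(1,2)] edge_constraint_def by simp
  qed
  then show ?thesis
    unfolding edge_constraint_def by simp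
qed

lemma edge_equivI:
  assumes "\<And>mu. \<forall>(a, b) \<in> EM - {(ch, t) | ch. ch \<in> VM \<and> t \<subseteq> ch}. edge_constraint D mu a b \<Longrightarrow>
             edge_constraint D mu c1 t \<longleftrightarrow> edge_constraint D mu c2 t"
  shows "edge_equiv D C VM EM c1 c2 t"
proof -
  let ?E0 = "EM - {(ch, t) | ch. ch \<in> VM \<and> t \<subseteq> ch}"
  have "(\<forall>(a, b) \<in> ?E0 \<union> {(c1, t)}. edge_constraint D mu a b) \<longleftrightarrow>
        (\<forall>(a, b) \<in> ?E0 \<union> {(c2, t)}. edge_constraint D mu a b)" for mu
    using assms by auto
  then show ?thesis
    unfolding edge_equiv_def Pset_def Let_def by simp
qed

lemma edge_constraint_iff_through_edge:
  assumes "(c, s) \<in> EM" and "t \<subset> s" and "s \<subseteq> c"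
    and "\<forall>(a, b) \<in> EM - {(ch, t) | ch. ch \<in> VM \<and> t \<subseteq> ch}. edge_constraint D mu a b"
  shows "edge_constraint D mu s t \<longleftrightarrow> edge_constraint D mu c t"
proof -
  have "edge_constraint D mu c s"
    using assms by auto
  then show ?thesis
    using edge_constraint_trans_iff assms(2,3) by blast
qed

lemma edge_equiv_parent_child:
  assumes "(c, s) \<in> EM" and "t \<subset> s" and "s \<subseteq> c"
  shows "edge_equiv D C VM EM c s t"
  by (rule edge_equivI) (use edge_constraint_iff_through_edge[OF assms] in blast)

lemma edge_equiv_siblings:
  assumes "(c, s1) \<in> EM" and "(c, s2) \<in> EM" and "s1 \<subseteq> c" and "s2 \<subseteq> c"
    and "t \<subset> s1" and "t \<subset> s2"
  shows "edge_equiv D C VM EM s1 s2 t"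
  by (rule edge_equivI)
    (use edge_constraint_iff_through_edge[OF assms(1,5,3)]
         edge_constraint_iff_through_edge[OF assms(2,6,4)] in blast)

theorem proposition7:
  fixes n :: nat and D :: "nat \<Rightarrow> 'a set"
    and C VM :: "nat set set" and EM :: "(nat set \<times> nat set) set"
  assumes fin: "\<forall>i \<in> {1..n}. finite (D i)"
    and C_sub: "C \<subseteq> Pow {1..n}"
    and diag: "marginal_polytope_diagram n C VM EM"
  shows "(\<forall>c \<in> VM. \<forall>s \<in> VM. \<forall>t \<in> VM.
            t \<subset> s \<and> s \<subset> c \<and> (c, s) \<in> EM \<longrightarrow> edge_equiv D C VM EM c s t)
       \<and> (\<forall>c s1 s2. (c, s1) \<in> EM \<and> (c, s2) \<in> EM \<longrightarrow>
            (\<forall>t \<in> VM. t \<subset> s1 \<and> t \<subset> s2 \<longrightarrow> edge_equiv D C VM EM s1 s2 t))"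
proof -
  have edge_sub: "s \<subseteq> c" if "(c, s) \<in> EM" for c s
    using diag that unfolding marginal_polytope_diagram_def by auto
  show ?thesis
  proof (intro conjI ballI allI impI)
    fix c s t assume "t \<subset> s \<and> s \<subset> c \<and> (c, s) \<in> EM"
    then show "edge_equiv D C VM EM c s t"
      by (blast intro: edge_equiv_parent_child)
  next
    fix c s1 s2 t assume "(c, s1) \<in> EM \<and> (c, s2) \<in> EM" and "t \<subset> s1 \<and> t \<subset> s2"
    then show "edge_equiv D C VM EM s1 s2 t"
      using edge_equiv_siblings edge_sub by meson
  qed
qed

end
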